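(* Let $P$ be a program over a propositional signature $\Sigma$ and $q\in\Sigma$. Then for every program $R$ over $\Sigma\setminus\{q\}$, $\{Y\setminus\{q\}: Y\in AS(P\cup R)\}\subseteq AS(f_{SP}(P,q)\cup R)$.
   Context: A program over $\Sigma$ is a finite set of rules $r$ of the form $a_1\vee\dots\vee a_k\leftarrow b_1,\dots,b_l,\ not\,c_1,\dots,not\,c_m,\ not\,not\,d_1,\dots,not\,not\,d_n$ with atoms in $\Sigma$; write $H(r)=\{a_i\}$, $B^+(r)=\{b_i\}$, $B^-(r)=\{c_i\}$, $B^{--}(r)=\{d_i\}$, $B(r)=B^+(r)\cup\{not\,c: c\in B^-(r)\}\cup\{not\,not\,d:d\in B^{--}(r)\}$ (elements of $B(r)$ are literals); a rule is written $H(r)\leftarrow B(r)$. $\Sigma(r)$, $\Sigma(P)$ are the atoms occurring in $r$, $P$. Reduct: $P^I=\{H(r)\leftarrow B^+(r): r\in P, B^-(r)\cap I=\emptyset, B^{--}(r)\subseteq I\}$. $I$ classically satisfies $r$ if $B^+(r)\subseteq I$, $B^-(r)\cap I=\emptyset$, $B^{--}(r)\subseteq I$ imply $H(r)\cap I\ne\emptyset$. An HT-interpretation $\langle X,Y\rangle$ ($X\subseteq Y$) is an HT-model of $P$ if $Y$ classically satisfies all rules of $P$ and $X$ all rules of $P^Y$; $\mathcal{HT}(P)$ is the set of HT-models with $X,Y\subseteq\Sigma(P)$. $Y$ is an answer set of $P$ if $\langle Y,Y\rangle\in\mathcal{HT}(P)$ and no $X\subsetneq Y$ has $\langle X,Y\rangle\in\mathcal{HT}(P)$;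 $AS(P)$ is the set of answer sets. Normal form: $r$ is tautological if $H(r)\cap B^+(r)\ne\emptyset$ or $B^+(r)\cap B^-(r)\ne\emptyset$ or $B^-(r)\cap B^{--}(r)\ne\emptyset$; $r\in P$ is minimal in $P$ if no $r'\in P$ has ($H(r')\subseteq H(r)$ and $B(r')\subsetneq B(r)$) or ($H(r')\subsetneq H(r)$ and $B(r')\subseteq B(r)$). $NF(P)$ is obtained by: 1. removing tautological rules; 2. removing from $B^{--}(r)$ atoms in $B^+(r)$; 3. removing from $H(r)$ atoms in $B^-(r)$; 4. removing rules not minimal in the resulting program. Notation: for a set $S$ of literals, $not\,(S)=\{not\,s:s\in S\}$, $not\,not\,(S)=\{not\,not\,s:s\in S\}$, simplifying $not\,not\,not\,p=not\,p$ and $not\,not\,not\,not\,p=not\,not\,p$. $B^{\setminus q}(r)=B(r)\setminus\{q,not\,q,not\,not\,q\}$, $H^{\setminus q}(r)=H(r)\setminus\{q\}$. For a set of rules $Q$, $D_q(Q)$ is the set of all sets $not\,(\{l_1,\dots,l_m\})\cup not\,not\,(\{l_{m+1},\dots,l_n\})$ where $\langle\{r_1,\dots,r_m\},\{r_{m+1},\dots,r_n\}\rangle$ is a partition of $Q$ (parts possibly empty), $l_i\in B^{\setminus q}(r_i)$ for $i\le m$, $l_j\in H^{\setminus q}(r_j)$ for $j>m$ (so $D_q(\emptyset)=\{\emptyset\}$). The operator $f_{SP}$: let $P'=NF(P)$, $R=\{r\in P': q\notin\Sigma(r)\}$, $R_0=\{r\in P':q\in B(r)\}$, $R_1=\{r\in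 P': not\,q\in B(r)\}$, $R_2=\{r\in P': not\,not\,q\in B(r), q\notin H(r)\}$, $R_3=\{r\in P': not\,not\,q\in B(r), q\in H(r)\}$, $R_4=\{r\in P': not\,not\,q\notin B(r), q\in H(r)\}$. $P''$ consists of: every $r\in R$; and (1a) for $r_0\in R_0$, $r_4\in R_4$: $H(r_0)\cup H^{\setminus q}(r_4)\leftarrow B^{\setminus q}(r_0)\cup B(r_4)$; (2a) for $r_0\in R_0$, $r_3\in R_3$, $r'\in R_1\cup R_4$: $H(r_0)\cup H^{\setminus q}(r_3)\leftarrow B^{\setminus q}(r_0)\cup B^{\setminus q}(r_3)\cup not\,(H^{\setminus q}(r'))\cup not\,not\,(B^{\setminus q}(r'))$; (3a) for $r_0\in R_0$, $r_3\in R_3$, $h\in H(r_0)$, $D\in D_q((R_0\cup R_2)\setminus\{r_0\})$: $H(r_0)\leftarrow B^{\setminus q}(r_0)\cup\{not\,not\,h\}\cup D\cup B^{\setminus q}(r_3)\cup not\,(H^{\setminus q}(r_3))$; (1b) for $r_2\in R_2$, $r_4\in R_4$: $H(r_2)\leftarrow B^{\setminus q}(r_2)\cup not\,(H^{\setminus q}(r_4))\cup not\,not\,(B(r_4))$; (2b) for $r_2\in R_2$, $r_3\in R_3$, $r'\in R_1\cup R_4$: $H(r_2)\leftarrow B^{\setminus q}(r_2)\cup not\,(H^{\setminus q}(r_3)\cup H^{\setminus q}(r'))\cup not\,not\,(B^{\setminus q}(r_3)\cup B^{\setminus q}(r'))$; (3b) for $r_2\in R_2$, $r_3\in R_3$,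 $h\in H(r_2)$, $D\in D_q((R_0\cup R_2)\setminus\{r_2\})$: $H(r_2)\leftarrow B^{\setminus q}(r_2)\cup not\,(H^{\setminus q}(r_3))\cup not\,not\,(B^{\setminus q}(r_3)\cup\{h\})\cup D$; (4) for $r'\in R_1\cup R_4$, $D\in D_q(R_3\cup R_4)$ with $D\cap not\,(B^{\setminus q}(r'))=\emptyset$: $H^{\setminus q}(r')\leftarrow B^{\setminus q}(r')\cup D$; (5) for $r'\in R_1\cup R_4$, $r_3\in R_3$, $r\in R_0\cup R_2$, $D\in D_q(R_4)$ with $D\cap not\,(B^{\setminus q}(r'))=\emptyset$: $H^{\setminus q}(r')\leftarrow B^{\setminus q}(r')\cup not\,(H(r)\cup H^{\setminus q}(r_3))\cup not\,not\,(B^{\setminus q}(r)\cup B^{\setminus q}(r_3))\cup D$; (6) for $r'\in R_1\cup R_4$, $r_3\in R_3$, $h\in H^{\setminus q}(r')$, $D\in D_q((R_1\cup R_4)\setminus\{r'\})$: $H^{\setminus q}(r')\leftarrow B^{\setminus q}(r')\cup not\,(H^{\setminus q}(r_3))\cup not\,not\,(B^{\setminus q}(r_3)\cup\{h\})\cup D$; (7) for $r_0\in R_0$, $r_3,r_3'\in R_3$ with $r_3\ne r_3'$, $D\in D_q((R_0\cup R_2)\setminus\{r_0\})$, $h\in H(r_0)$: $H(r_0)\cup H^{\setminus q}(r_3)\leftarrow B^{\setminus q}(r_0)\cup B^{\setminus q}(r_3)\cup not\,(H^{\setminus q}(r_3'))\cup not\,not\,(B^{\setminus q}(r_3')\cup\{h\})\cup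 D$. Then $f_{SP}(P,q)=NF(P'')$. *)

theory Defs
  imports Main
begin

datatype 'a lit = Pos 'a | Neg 'a | NegNeg 'a

text \<open>A rule  H <- B+, not B-, not not B--  is given by its four atom sets.\<close>
record 'a rule =
  hd  :: "'a set"
  bp  :: "'a set"
  bm  :: "'a set"
  bmm :: "'a set"

definition finite_rule :: "'a rule \<Rightarrow> bool" where
  "finite_rule r \<longleftrightarrow> finite (hd r) \<and> finite (bp r) \<and> finite (bm r) \<and> finite (bmm r)"

definition body :: "'a rule \<Rightarrow> 'a lit set" where
  "body r = Pos ` bp r \<union> Neg ` bm r \<union> NegNeg ` bmm r"

definition mk_rule :: "'a set \<Rightarrow> 'a lit set \<Rightarrow> 'a rule" where
  "mk_rule H L = \<lparr>hd = H, bp = {a. Pos a \<in> L}, bm = {a. Neg a \<in> L}, bmm = {a. NegNeg a \<in> L}\<rparr>"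

definition atoms_rule :: "'a rule \<Rightarrow> 'a set" where
  "atoms_rule r = hd r \<union> bp r \<union> bm r \<union> bmm r"

definition atoms :: "'a rule set \<Rightarrow> 'a set" where
  "atoms P = (\<Union>r\<in>P. atoms_rule r)"

definition sat_rule :: "'a set \<Rightarrow> 'a rule \<Rightarrow> bool" where
  "sat_rule I r \<longleftrightarrow> (bp r \<subseteq> I \<and> bm r \<inter> I = {} \<and> bmm r \<subseteq> I \<longrightarrow> hd r \<inter> I \<noteq> {})"

definition sat :: "'a set \<Rightarrow> 'a rule set \<Rightarrow> bool" where
  "sat I P \<longleftrightarrow> (\<forall>r\<in>P. sat_rule I r)"

definition reduct :: "'a rule set \<Rightarrow> 'a set \<Rightarrow> 'a rule set" where
  "reduct P I = {\<lparr>hd = hd r, bp = bp r, bm = {}, bmm = {}\<rparr> | r. r \<in> P \<and> bm r \<inter> I = {} \<and> bmm r \<subseteq> I}"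

definition HT :: "'a rule set \<Rightarrow> ('a set \<times> 'a set) set" where
  "HT P = {(X, Y). X \<subseteq> Y \<and> Y \<subseteq> atoms P \<and> sat Y P \<and> sat X (reduct P Y)}"

definition AS :: "'a rule set \<Rightarrow> 'a set set" where
  "AS P = {Y. (Y, Y) \<in> HT P \<and> \<not> (\<exists>X. X \<subset> Y \<and> (X, Y) \<in> HT P)}"

definition tautological :: "'a rule \<Rightarrow> bool" where
  "tautological r \<longleftrightarrow> hd r \<inter> bp r \<noteq> {} \<or> bp r \<inter> bm r \<noteq> {} \<or> bm r \<inter> bmm r \<noteq> {}"

definition minimal_in :: "'a rule \<Rightarrow> 'a rule set \<Rightarrow> bool" where
  "minimal_in r P \<longleftrightarrow> \<not> (\<exists>r'\<in>P. (hd r' \<subseteq> hd r \<and> body r' \<subset> body r) \<or>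
                                  (hd r' \<subset> hd r \<and> body r' \<subseteq> body r))"

definition NF :: "'a rule set \<Rightarrow> 'a rule set" where
  "NF P = (let P1 = {r \<in> P. \<not> tautological r};
               P2 = (\<lambda>r. r\<lparr>bmm := bmm r - bp r\<rparr>) ` P1;
               P3 = (\<lambda>r. r\<lparr>hd := hd r - bm r\<rparr>) ` P2
           in {r \<in> P3. minimal_in r P3})"

text \<open>not(l), with not not not p = not p\<close>
fun lnot :: "'a lit \<Rightarrow> 'a lit" where
  "lnot (Pos a) = Neg a"
| "lnot (Neg a) = NegNeg a"
| "lnot (NegNeg a) = Neg a"

text \<open>not not (l), with not not not p = not p, not not not not p = not not p\<close>
fun lnn :: "'a lit \<Rightarrow> 'a lit" where
  "lnn (Pos a) = NegNeg a"
| "lnn (Neg a) = Neg a"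
| "lnn (NegNeg a) = NegNeg a"

definition Bq :: "'a \<Rightarrow> 'a rule \<Rightarrow> 'a lit set" where
  "Bq q r = body r - {Pos q, Neg q, NegNeg q}"

definition Hq :: "'a \<Rightarrow> 'a rule \<Rightarrow> 'a set" where
  "Hq q r = hd r - {q}"

text \<open>D_q(Q): each rule of Q contributes either not(l) for some l in B^{\q}(r)
  or not not h for some h in H^{\q}(r) (the partition is encoded by the choice).\<close>
definition Dq :: "'a \<Rightarrow> 'a rule set \<Rightarrow> 'a lit set set" where
  "Dq q Q = {g ` Q | g. \<forall>r\<in>Q. g r \<in> lnot ` Bq q r \<union> NegNeg ` Hq q r}"

definition fSP :: "'a rule set \<Rightarrow> 'a \<Rightarrow> 'a rule set" where
  "fSP P q = (let P' = NF P;
     R  = {r \<in> P'. q \<notin> atoms_rule r};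
     R0 = {r \<in> P'. Pos q \<in> body r};
     R1 = {r \<in> P'. Neg q \<in> body r};
     R2 = {r \<in> P'. NegNeg q \<in> body r \<and> q \<notin> hd r};
     R3 = {r \<in> P'. NegNeg q \<in> body r \<and> q \<in> hd r};
     R4 = {r \<in> P'. NegNeg q \<notin> body r \<and> q \<in> hd r};
     B' = Bq q; H' = Hq q;
     P'' = R
       \<union> {mk_rule (hd r0 \<union> H' r4) (B' r0 \<union> body r4) | r0 r4. r0 \<in> R0 \<and> r4 \<in> R4}
       \<union> {mk_rule (hd r0 \<union> H' r3) (B' r0 \<union> B' r3 \<union> Neg ` H' r' \<union> lnn ` B' r')
           | r0 r3 r'. r0 \<in> R0 \<and> r3 \<in> R3 \<and> r' \<in> R1 \<union> R4}
       \<union> {mk_rule (hd r0) (B' r0 \<union> {NegNeg h} \<union> D \<union> B' r3 \<union> Neg ` H' r3)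
           | r0 r3 h D. r0 \<in> R0 \<and> r3 \<in> R3 \<and> h \<in> hd r0 \<and> D \<in> Dq q ((R0 \<union> R2) - {r0})}
       \<union> {mk_rule (hd r2) (B' r2 \<union> Neg ` H' r4 \<union> lnn ` body r4) | r2 r4. r2 \<in> R2 \<and> r4 \<in> R4}
       \<union> {mk_rule (hd r2) (B' r2 \<union> Neg ` (H' r3 \<union> H' r') \<union> lnn ` (B' r3 \<union> B' r'))
           | r2 r3 r'. r2 \<in> R2 \<and> r3 \<in> R3 \<and> r' \<in> R1 \<union> R4}
       \<union> {mk_rule (hd r2) (B' r2 \<union> Neg ` H' r3 \<union> lnn ` (B' r3 \<union> {Pos h}) \<union> D)
           | r2 r3 h D. r2 \<in> R2 \<and> r3 \<in> R3 \<and> h \<in> hd r2 \<and> D \<in> Dq q ((R0 \<union> R2) - {r2})}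
       \<union> {mk_rule (H' r') (B' r' \<union> D)
           | r' D. r' \<in> R1 \<union> R4 \<and> D \<in> Dq q (R3 \<union> R4) \<and> D \<inter> lnot ` B' r' = {}}
       \<union> {mk_rule (H' r') (B' r' \<union> Neg ` (hd r \<union> H' r3) \<union> lnn ` (B' r \<union> B' r3) \<union> D)
           | r' r3 r D. r' \<in> R1 \<union> R4 \<and> r3 \<in> R3 \<and> r \<in> R0 \<union> R2 \<and> D \<in> Dq q R4
                        \<and> D \<inter> lnot ` B' r' = {}}
       \<union> {mk_rule (H' r') (B' r' \<union> Neg ` H' r3 \<union> lnn ` (B' r3 \<union> {Pos h}) \<union> D)
           | r' r3 h D. r' \<in> R1 \<union> R4 \<and> r3 \<in> R3 \<and> h \<in> H' r' \<and> D \<in> Dq q ((R1 \<union> R4) - {r'})}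
       \<union> {mk_rule (hd r0 \<union> H' r3) (B' r0 \<union> B' r3 \<union> Neg ` H' r3' \<union> lnn ` (B' r3' \<union> {Pos h}) \<union> D)
           | r0 r3 r3' D h. r0 \<in> R0 \<and> r3 \<in> R3 \<and> r3' \<in> R3 \<and> r3 \<noteq> r3'
                            \<and> D \<in> Dq q ((R0 \<union> R2) - {r0}) \<and> h \<in> hd r0}
   in NF P'')"

end

(*
  Let Y be an answer set of P \<union> R and Y' = Y - {q}. Normal form preserves HT-models of
  programs of finite rules, and whether q belongs to X or Y is irrelevant for rules not
  mentioning q; so f_SP(P, q) may be replaced by the program P'' of its definition, and P
  by NF(P).

  Y' is a model of P'': if q \<notin> Y, every rule of R1 \<union> R4 is satisfied by Y even with q
  deleted from it; if q \<in> Y, the same holds for R0 \<union> R2, but fails for some rule of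
  R3 \<union> R4 (otherwise Y - {q} would be a smaller model of the reduct). A set D \<in> D_q(Q)
  holds exactly when every rule of Q is satisfied with q deleted.

  Y' is minimal: a model X \<subset> Y' of the reducts of P'' and R yields a model of
  (NF(P) \<union> R)^Y strictly below Y, namely X if q \<notin> Y; if q \<in> Y, it is insert q X when
  X satisfies all rules of R0 with q deleted, and X when it violates one of them.
*)
theory Submission
  imports Defs
begin

fun lit_holds :: "'a set \<Rightarrow> 'a set \<Rightarrow> 'a lit \<Rightarrow> bool" where
  "lit_holds X Y (Pos a) \<longleftrightarrow> a \<in> X"
| "lit_holds X Y (Neg a) \<longleftrightarrow> a \<notin> Y"
| "lit_holds X Y (NegNeg a) \<longleftrightarrow> a \<in> Y"

fun lit_atom :: "'a lit \<Rightarrow> 'a" where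
  "lit_atom (Pos a) = a"
| "lit_atom (Neg a) = a"
| "lit_atom (NegNeg a) = a"

definition ht_sat :: "'a set \<Rightarrow> 'a set \<Rightarrow> 'a rule \<Rightarrow> bool" where
  "ht_sat X Y r \<longleftrightarrow> (\<forall>l\<in>body r. lit_holds X Y l) \<longrightarrow> hd r \<inter> X \<noteq> {}"

lemma ht_sat_iff:
  "ht_sat X Y r \<longleftrightarrow> (bp r \<subseteq> X \<and> bm r \<inter> Y = {} \<and> bmm r \<subseteq> Y \<longrightarrow> hd r \<inter> X \<noteq> {})"
  unfolding ht_sat_def body_def by (auto simp: ball_Un subset_iff disjoint_iff)

lemma sat_iff_ht_sat: "sat Y P \<longleftrightarrow> (\<forall>r\<in>P. ht_sat Y Y r)"
  unfolding sat_def sat_rule_def ht_sat_iff by auto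

lemma sat_reduct_iff_ht_sat: "sat X (reduct P Y) \<longleftrightarrow> (\<forall>r\<in>P. ht_sat X Y r)"
proof -
  have "reduct P Y = (\<lambda>r. \<lparr>hd = hd r, bp = bp r, bm = {}, bmm = {}\<rparr>) ` {r \<in> P. bm r \<inter> Y = {} \<and> bmm r \<subseteq> Y}"
    unfolding reduct_def by auto
  then show ?thesis
    unfolding sat_def sat_rule_def ht_sat_iff by auto
qed

lemma mem_HT_iff:
  "(X, Y) \<in> HT P \<longleftrightarrow> X \<subseteq> Y \<and> Y \<subseteq> atoms P \<and> (\<forall>r\<in>P. ht_sat Y Y r) \<and> (\<forall>r\<in>P. ht_sat X Y r)"
  unfolding HT_def mem_Collect_eq prod.case sat_reduct_iff_ht_sat
  unfolding sat_iff_ht_sat ..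

lemma ht_sat_Diff_if_notin_hd: "q \<notin> hd r \<Longrightarrow> ht_sat Y Y r \<Longrightarrow> ht_sat (Y - {q}) Y r"
  unfolding ht_sat_iff by auto

text \<open>The condition \<open>Y \<subseteq> atoms P\<close> built into \<^const>\<open>HT\<close> is automatic for answer sets:
  an atom outside the program can be dropped from any model of the reduct.\<close>
lemma AS_iff:
  "Y \<in> AS P \<longleftrightarrow> (\<forall>r\<in>P. ht_sat Y Y r) \<and> (\<forall>X. X \<subset> Y \<longrightarrow> (\<exists>r\<in>P. \<not> ht_sat X Y r))"
  (is "_ \<longleftrightarrow> ?model \<and> ?minimal")
proof
  assume "Y \<in> AS P"
  then have HT_Y: "(Y, Y) \<in> HT P" and no_smaller: "\<not> (\<exists>X. X \<subset> Y \<and> (X, Y) \<in> HT P)"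
    unfolding AS_def by auto
  have "?minimal"
  proof (intro allI impI)
    fix X assume "X \<subset> Y"
    with no_smaller have "(X, Y) \<notin> HT P" by blast
    with HT_Y \<open>X \<subset> Y\<close> show "\<exists>r\<in>P. \<not> ht_sat X Y r"
      unfolding mem_HT_iff by auto
  qed
  moreover from HT_Y have "?model"
    unfolding mem_HT_iff by auto
  ultimately show "?model \<and> ?minimal" by blast
next
  assume "?model \<and> ?minimal"
  then have model: "?model" and minimal: "?minimal" by auto
  have "Y \<subseteq> atoms P"
  proof
    fix a assume "a \<in> Y"
    show "a \<in> atoms P"
    proof (rule ccontr)
      assume "a \<notin> atoms P"
      then have "\<forall>r\<in>P. ht_sat (Y - {a}) Y r"
        using model unfolding atoms_def atoms_rule_def by (auto intro: ht_sat_Diff_if_notin_hd)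
      moreover have "Y - {a} \<subset> Y" using \<open>a \<in> Y\<close> by auto
      ultimately show False using minimal by auto
    qed
  qed
  with model have "(Y, Y) \<in> HT P"
    unfolding mem_HT_iff by auto
  moreover have "(X, Y) \<notin> HT P" if "X \<subset> Y" for X
    using minimal that unfolding mem_HT_iff by auto
  ultimately show "Y \<in> AS P"
    unfolding AS_def by auto
qed

lemma body_mk_rule [simp]: "body (mk_rule H L) = L"
proof (intro set_eqI iffI)
  fix l assume "l \<in> L"
  then show "l \<in> body (mk_rule H L)" by (cases l) (auto simp: body_def mk_rule_def)
qed (auto simp: body_def mk_rule_def)

lemma hd_mk_rule [simp]: "hd (mk_rule H L) = H"
  by (simp add: mk_rule_def)

lemma ht_sat_mk_rule: "ht_sat X Y (mk_rule H L) \<longleftrightarrow> (\<forall>l\<in>L. lit_holds X Y l) \<longrightarrow> H \<inter> X \<noteq> {}"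
  by (simp add: ht_sat_def)

lemma finite_rule_mk_rule:
  assumes "finite H" and "finite L"
  shows "finite_rule (mk_rule H L)"
proof -
  have "{a. Pos a \<in> L} = Pos -` L" "{a. Neg a \<in> L} = Neg -` L" "{a. NegNeg a \<in> L} = NegNeg -` L"
    by auto
  with assms show ?thesis
    unfolding finite_rule_def mk_rule_def by (auto intro!: finite_vimageI simp: inj_def)
qed

lemma finite_body: "finite_rule r \<Longrightarrow> finite (body r)"
  by (simp add: finite_rule_def body_def)

lemma ht_sat_subsumed:
  "hd r' \<subseteq> hd r \<Longrightarrow> body r' \<subseteq> body r \<Longrightarrow> ht_sat X Y r' \<Longrightarrow> ht_sat X Y r"
  unfolding ht_sat_def by blast

lemma lit_holds_there: "X \<subseteq> Y \<Longrightarrow> lit_holds X Y l \<Longrightarrow> lit_holds Y Y l"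
  by (cases l) auto

lemma lit_holds_lnot [simp]: "lit_holds X Y (lnot l) \<longleftrightarrow> \<not> lit_holds Y Y l"
  by (cases l) auto

lemma lit_holds_lnn [simp]: "lit_holds X Y (lnn l) \<longleftrightarrow> lit_holds Y Y l"
  by (cases l) auto

lemma lit_atom_lnot [simp]: "lit_atom (lnot l) = lit_atom l"
  by (cases l) auto

lemma lit_atom_lnn [simp]: "lit_atom (lnn l) = lit_atom l"
  by (cases l) auto

lemma ball_Neg_holds_iff [simp]: "(\<forall>l\<in>Neg ` A. lit_holds X Y l) \<longleftrightarrow> A \<inter> Y = {}"
  by auto

lemma ball_lnn_holds_iff [simp]: "(\<forall>l\<in>lnn ` A. lit_holds X Y l) \<longleftrightarrow> (\<forall>l\<in>A. lit_holds Y Y l)"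
  by auto

lemma lit_holds_insert: "lit_atom l \<noteq> q \<Longrightarrow> lit_holds (insert q X) Y l \<longleftrightarrow> lit_holds X Y l"
  by (cases l) auto

definition nf_trim :: "'a rule \<Rightarrow> 'a rule" where
  "nf_trim r = r\<lparr>bmm := bmm r - bp r, hd := hd r - bm r\<rparr>"

definition nf_candidates :: "'a rule set \<Rightarrow> 'a rule set" where
  "nf_candidates P = nf_trim ` {r \<in> P. \<not> tautological r}"

lemma nf_trim_simps [simp]:
  "hd (nf_trim r) = hd r - bm r" "bp (nf_trim r) = bp r"
  "bm (nf_trim r) = bm r" "bmm (nf_trim r) = bmm r - bp r"
  by (simp_all add: nf_trim_def)

lemma NF_eq: "NF P = {r \<in> nf_candidates P. minimal_in r (nf_candidates P)}"
proof -
  have "(\<lambda>r. r\<lparr>hd := hd r - bm r\<rparr>) ` (\<lambda>r. r\<lparr>bmm := bmm r - bp r\<rparr>) ` A = nf_trim ` A"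
    for A :: "'a rule set"
    unfolding nf_trim_def image_image by simp
  then show ?thesis
    unfolding NF_def nf_candidates_def Let_def by simp
qed

lemma NF_memE:
  assumes "r \<in> NF P"
  obtains r0 where "r0 \<in> P" and "\<not> tautological r0" and "r = nf_trim r0"
  using assms unfolding NF_eq nf_candidates_def by auto

lemma NF_rule_disjoint:
  assumes "r \<in> NF P"
  shows "hd r \<inter> bp r = {}" "bp r \<inter> bm r = {}" "bm r \<inter> bmm r = {}"
    "bp r \<inter> bmm r = {}" "hd r \<inter> bm r = {}"
  using assms by (elim NF_memE; auto simp: tautological_def)+

lemma finite_rule_NF: "\<forall>r\<in>P. finite_rule r \<Longrightarrow> r \<in> NF P \<Longrightarrow> finite_rule r"
  by (elim NF_memE) (auto simp: finite_rule_def)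

lemma finite_NF: "finite P \<Longrightarrow> finite (NF P)"
  unfolding NF_eq nf_candidates_def by auto

lemma ht_sat_tautological: "X \<subseteq> Y \<Longrightarrow> tautological r \<Longrightarrow> ht_sat X Y r"
  unfolding tautological_def ht_sat_iff by auto

lemma ht_sat_nf_trim: "X \<subseteq> Y \<Longrightarrow> ht_sat X Y (nf_trim r) \<longleftrightarrow> ht_sat X Y r"
  unfolding ht_sat_iff by auto

lemma ht_sat_of_minimal_in:
  assumes "finite_rule r" and "r \<in> S" and "\<forall>r'\<in>S. minimal_in r' S \<longrightarrow> ht_sat X Y r'"
  shows "ht_sat X Y r"
  using assms
proof (induction "card (hd r) + card (body r)" arbitrary: r rule: less_induct)
  case less
  show ?case
  proof (cases "minimal_in r S")
    case True
    with less.prems show ?thesis by blast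
  next
    case False
    then obtain r' where "r' \<in> S" and r'_less:
        "(hd r' \<subseteq> hd r \<and> body r' \<subset> body r) \<or> (hd r' \<subset> hd r \<and> body r' \<subseteq> body r)"
      unfolding minimal_in_def by blast
    then have sub: "hd r' \<subseteq> hd r" "body r' \<subseteq> body r" by auto
    have fin: "finite (hd r)" "finite (body r)"
      using less.prems(1) finite_body by (auto simp: finite_rule_def)
    then have "finite (hd r')" "finite (body r')"
      using sub finite_subset by blast+
    then have "finite_rule r'"
      unfolding finite_rule_def body_def by (auto dest: finite_imageD simp: inj_on_def)
    moreover have "card (hd r') + card (body r') < card (hd r) + card (body r)"
      using r'_less fin psubset_card_mono card_mono by (metis add_le_less_mono add_less_le_mono)
    ultimately have "ht_sat X Y r'"
      using less \<open>r' \<in> S\<close> by blast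
    with sub show ?thesis by (rule ht_sat_subsumed)
  qed
qed

lemma ht_sat_NF_iff:
  assumes "X \<subseteq> Y" and "\<forall>r\<in>P. finite_rule r"
  shows "(\<forall>r\<in>NF P. ht_sat X Y r) \<longleftrightarrow> (\<forall>r\<in>P. ht_sat X Y r)"
proof
  assume NF_sat: "\<forall>r\<in>NF P. ht_sat X Y r"
  show "\<forall>r\<in>P. ht_sat X Y r"
  proof
    fix r assume "r \<in> P"
    show "ht_sat X Y r"
    proof (cases "tautological r")
      case True
      with assms(1) show ?thesis by (rule ht_sat_tautological)
    next
      case False
      with \<open>r \<in> P\<close> have "nf_trim r \<in> nf_candidates P"
        unfolding nf_candidates_def by auto
      moreover have "finite_rule (nf_trim r)"
        using assms(2) \<open>r \<in> P\<close> by (auto simp: finite_rule_def)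
      ultimately have "ht_sat X Y (nf_trim r)"
        using ht_sat_of_minimal_in NF_sat unfolding NF_eq by blast
      with assms(1) show ?thesis by (simp add: ht_sat_nf_trim)
    qed
  qed
next
  assume "\<forall>r\<in>P. ht_sat X Y r"
  with assms(1) show "\<forall>r\<in>NF P. ht_sat X Y r"
    by (auto elim: NF_memE simp: ht_sat_nf_trim)
qed

lemma lit_atom_Bq: "l \<in> Bq q r \<Longrightarrow> lit_atom l \<noteq> q"
  unfolding Bq_def body_def by auto

lemma Bq_subset_body: "Bq q r \<subseteq> body r"
  unfolding Bq_def by auto

lemma Bq_holds_of_body: "\<forall>l\<in>body r. lit_holds X Y l \<Longrightarrow> \<forall>l\<in>Bq q r. lit_holds X Y l"
  using Bq_subset_body[of q r] by auto

lemma Bq_holds_of_insert: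
  assumes "\<forall>l\<in>body r. lit_holds (insert q X) Y l"
  shows "\<forall>l\<in>Bq q r. lit_holds X Y l"
proof
  fix l assume "l \<in> Bq q r"
  with assms have "lit_holds (insert q X) Y l"
    using Bq_subset_body[of q r] by auto
  with \<open>l \<in> Bq q r\<close> show "lit_holds X Y l"
    by (simp add: lit_holds_insert lit_atom_Bq)
qed

lemma q_notin_Hq [simp]: "q \<notin> Hq q r"
  unfolding Hq_def by auto

lemma Hq_subset_hd: "Hq q r \<subseteq> hd r"
  unfolding Hq_def by auto

lemma body_q_iff:
  "Pos q \<in> body r \<longleftrightarrow> q \<in> bp r" "Neg q \<in> body r \<longleftrightarrow> q \<in> bm r"
  "NegNeg q \<in> body r \<longleftrightarrow> q \<in> bmm r"
  unfolding body_def by auto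

lemma body_holds_iff_Bq:
  "(\<forall>l\<in>body r. lit_holds X Y l) \<longleftrightarrow> (\<forall>l\<in>Bq q r. lit_holds X Y l)
     \<and> (q \<in> bp r \<longrightarrow> q \<in> X) \<and> (q \<in> bm r \<longrightarrow> q \<notin> Y) \<and> (q \<in> bmm r \<longrightarrow> q \<in> Y)"
proof -
  have "(\<forall>l\<in>body r. lit_holds X Y l) \<longleftrightarrow> (\<forall>l\<in>Bq q r. lit_holds X Y l)
     \<and> (Pos q \<in> body r \<longrightarrow> lit_holds X Y (Pos q)) \<and> (Neg q \<in> body r \<longrightarrow> lit_holds X Y (Neg q))
     \<and> (NegNeg q \<in> body r \<longrightarrow> lit_holds X Y (NegNeg q))"
    unfolding Bq_def by blast
  then show ?thesis
    by (simp add: body_q_iff)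
qed

lemma ht_sat_q_free_cong:
  assumes "q \<notin> atoms_rule r" and "X - {q} = X' - {q}" and "Y - {q} = Y' - {q}"
  shows "ht_sat X Y r \<longleftrightarrow> ht_sat X' Y' r"
proof -
  have "A \<subseteq> X \<longleftrightarrow> A \<subseteq> X'" "A \<inter> Y = {} \<longleftrightarrow> A \<inter> Y' = {}" "A \<subseteq> Y \<longleftrightarrow> A \<subseteq> Y'"
    "A \<inter> X = {} \<longleftrightarrow> A \<inter> X' = {}" if "q \<notin> A" for A
    using that assms(2,3) by blast+
  with assms(1) show ?thesis
    unfolding ht_sat_iff atoms_rule_def by simp
qed

lemma ball_ht_sat_q_free_cong:
  assumes "\<forall>r\<in>S. q \<notin> atoms_rule r" and "X - {q} = X' - {q}" and "Y - {q} = Y' - {q}"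
  shows "(\<forall>r\<in>S. ht_sat X Y r) \<longleftrightarrow> (\<forall>r\<in>S. ht_sat X' Y' r)"
proof (rule ball_cong[OF refl])
  fix r assume "r \<in> S"
  with assms(1) have "q \<notin> atoms_rule r" by simp
  from ht_sat_q_free_cong[OF this assms(2,3)] show "ht_sat X Y r \<longleftrightarrow> ht_sat X' Y' r" .
qed

definition R_free :: "'a rule set \<Rightarrow> 'a \<Rightarrow> 'a rule set" where
  "R_free P q = {r \<in> NF P. q \<notin> atoms_rule r}"

definition R0 :: "'a rule set \<Rightarrow> 'a \<Rightarrow> 'a rule set" where
  "R0 P q = {r \<in> NF P. Pos q \<in> body r}"

definition R1 :: "'a rule set \<Rightarrow> 'a \<Rightarrow> 'a rule set" where
  "R1 P q = {r \<in> NF P. Neg q \<in> body r}"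

definition R2 :: "'a rule set \<Rightarrow> 'a \<Rightarrow> 'a rule set" where
  "R2 P q = {r \<in> NF P. NegNeg q \<in> body r \<and> q \<notin> hd r}"

definition R3 :: "'a rule set \<Rightarrow> 'a \<Rightarrow> 'a rule set" where
  "R3 P q = {r \<in> NF P. NegNeg q \<in> body r \<and> q \<in> hd r}"

definition R4 :: "'a rule set \<Rightarrow> 'a \<Rightarrow> 'a rule set" where
  "R4 P q = {r \<in> NF P. NegNeg q \<notin> body r \<and> q \<in> hd r}"

lemmas R_defs = R_free_def R0_def R1_def R2_def R3_def R4_def

text \<open>Normal form makes the six classes a partition of \<open>NF P\<close> and fixes where \<open>q\<close> occurs
  in each rule.\<close>
lemma
  shows mem_R_freeD: "r \<in> R_free P q \<Longrightarrow> r \<in> NF P \<and> q \<notin> atoms_rule r"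
    and mem_R0D: "r \<in> R0 P q \<Longrightarrow> r \<in> NF P \<and> q \<in> bp r \<and> q \<notin> bm r \<and> q \<notin> bmm r \<and> q \<notin> hd r"
    and mem_R1D: "r \<in> R1 P q \<Longrightarrow> r \<in> NF P \<and> q \<notin> bp r \<and> q \<in> bm r \<and> q \<notin> bmm r \<and> q \<notin> hd r"
    and mem_R2D: "r \<in> R2 P q \<Longrightarrow> r \<in> NF P \<and> q \<notin> bp r \<and> q \<notin> bm r \<and> q \<in> bmm r \<and> q \<notin> hd r"
    and mem_R3D: "r \<in> R3 P q \<Longrightarrow> r \<in> NF P \<and> q \<notin> bp r \<and> q \<notin> bm r \<and> q \<in> bmm r \<and> q \<in> hd r"
    and mem_R4D: "r \<in> R4 P q \<Longrightarrow> r \<in> NF P \<and> q \<notin> bp r \<and> q \<notin> bm r \<and> q \<notin> bmm r \<and> q \<in> hd r"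
  unfolding R_defs body_q_iff using NF_rule_disjoint[of r P] by blast+

lemma NF_R_cases:
  assumes "r \<in> NF P"
  obtains "r \<in> R_free P q" | "r \<in> R0 P q" | "r \<in> R1 P q" | "r \<in> R2 P q" | "r \<in> R3 P q" | "r \<in> R4 P q"
  using assms unfolding R_defs body_q_iff atoms_rule_def by auto

lemma body_R4: "r \<in> R4 P q \<Longrightarrow> body r = Bq q r"
  using mem_R4D[of r P q] unfolding Bq_def body_def by auto

text \<open>\<open>Y\<close> satisfies \<open>Hq q r \<leftarrow> Bq q r\<close>, the rule \<open>r\<close> with every occurrence of \<open>q\<close> deleted.\<close>
definition residue_sat :: "'a set \<Rightarrow> 'a \<Rightarrow> 'a rule \<Rightarrow> bool" where
  "residue_sat Y q r \<longleftrightarrow> (\<forall>l\<in>Bq q r. lit_holds Y Y l) \<longrightarrow> Hq q r \<inter> Y \<noteq> {}"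

lemma ht_sat_Diff_if_residue_sat:
  assumes "residue_sat Y q r"
  shows "ht_sat (Y - {q}) Y r"
  unfolding ht_sat_def
proof
  assume "\<forall>l\<in>body r. lit_holds (Y - {q}) Y l"
  then have "\<forall>l\<in>Bq q r. lit_holds Y Y l"
    using Bq_subset_body lit_holds_there[of "Y - {q}" Y] by (meson Diff_subset subsetD)
  with assms have "Hq q r \<inter> Y \<noteq> {}"
    unfolding residue_sat_def by simp
  then show "hd r \<inter> (Y - {q}) \<noteq> {}"
    unfolding Hq_def by auto
qed

lemma residue_sat_if_ht_sat:
  assumes "ht_sat Y Y r"
    and "q \<in> bp r \<longrightarrow> q \<in> Y" and "q \<in> bm r \<longrightarrow> q \<notin> Y" and "q \<in> bmm r \<longrightarrow> q \<in> Y"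
    and "q \<in> hd r \<longrightarrow> q \<notin> Y"
  shows "residue_sat Y q r"
  unfolding residue_sat_def
proof
  assume "\<forall>l\<in>Bq q r. lit_holds Y Y l"
  with assms(2-4) have "\<forall>l\<in>body r. lit_holds Y Y l"
    by (simp add: body_holds_iff_Bq[of _ _ _ q])
  with assms(1) have "hd r \<inter> Y \<noteq> {}"
    unfolding ht_sat_def by blast
  with assms(5) show "Hq q r \<inter> Y \<noteq> {}"
    unfolding Hq_def by blast
qed

lemma residue_sat_if_Dq_holds:
  assumes "D \<in> Dq q Q" and "\<forall>d\<in>D. lit_holds X Y d" and "r \<in> Q"
  shows "residue_sat Y q r"
proof -
  obtain g where "D = g ` Q" and g: "\<forall>r\<in>Q. g r \<in> lnot ` Bq q r \<union> NegNeg ` Hq q r"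
    using assms(1) unfolding Dq_def by blast
  with assms(2,3) have "lit_holds X Y (g r)" and "g r \<in> lnot ` Bq q r \<union> NegNeg ` Hq q r"
    by auto
  then show ?thesis
    unfolding residue_sat_def by auto
qed

lemma Dq_holds_if_residue_sat:
  assumes "\<forall>r\<in>Q. residue_sat Y q r"
  shows "\<exists>D\<in>Dq q Q. \<forall>d\<in>D. lit_holds X Y d"
proof -
  have "\<forall>r\<in>Q. \<exists>d. d \<in> lnot ` Bq q r \<union> NegNeg ` Hq q r \<and> lit_holds X Y d"
  proof
    fix r assume "r \<in> Q"
    with assms have "(\<exists>l\<in>Bq q r. \<not> lit_holds Y Y l) \<or> (\<exists>h\<in>Hq q r. h \<in> Y)"
      unfolding residue_sat_def by blast
    then show "\<exists>d. d \<in> lnot ` Bq q r \<union> NegNeg ` Hq q r \<and> lit_holds X Y d"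
      by force
  qed
  then obtain g where "\<forall>r\<in>Q. g r \<in> lnot ` Bq q r \<union> NegNeg ` Hq q r \<and> lit_holds X Y (g r)"
    by metis
  then show ?thesis
    unfolding Dq_def by blast
qed

lemma lit_atom_Dq:
  assumes "D \<in> Dq q Q" and "d \<in> D"
  shows "lit_atom d \<noteq> q"
proof -
  from assms obtain r where "d \<in> lnot ` Bq q r \<union> NegNeg ` Hq q r"
    unfolding Dq_def by blast
  then show ?thesis
    using lit_atom_Bq q_notin_Hq by fastforce
qed

definition rules_1a :: "'a rule set \<Rightarrow> 'a \<Rightarrow> 'a rule set" where
  "rules_1a P q = {mk_rule (hd r0 \<union> Hq q r4) (Bq q r0 \<union> body r4) | r0 r4. r0 \<in> R0 P q \<and> r4 \<in> R4 P q}"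

definition rules_2a :: "'a rule set \<Rightarrow> 'a \<Rightarrow> 'a rule set" where
  "rules_2a P q = {mk_rule (hd r0 \<union> Hq q r3) (Bq q r0 \<union> Bq q r3 \<union> Neg ` Hq q r' \<union> lnn ` Bq q r')
      | r0 r3 r'. r0 \<in> R0 P q \<and> r3 \<in> R3 P q \<and> r' \<in> R1 P q \<union> R4 P q}"

definition rules_3a :: "'a rule set \<Rightarrow> 'a \<Rightarrow> 'a rule set" where
  "rules_3a P q = {mk_rule (hd r0) (Bq q r0 \<union> {NegNeg h} \<union> D \<union> Bq q r3 \<union> Neg ` Hq q r3)
      | r0 r3 h D. r0 \<in> R0 P q \<and> r3 \<in> R3 P q \<and> h \<in> hd r0 \<and> D \<in> Dq q ((R0 P q \<union> R2 P q) - {r0})}"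

definition rules_1b :: "'a rule set \<Rightarrow> 'a \<Rightarrow> 'a rule set" where
  "rules_1b P q = {mk_rule (hd r2) (Bq q r2 \<union> Neg ` Hq q r4 \<union> lnn ` body r4) | r2 r4. r2 \<in> R2 P q \<and> r4 \<in> R4 P q}"

definition rules_2b :: "'a rule set \<Rightarrow> 'a \<Rightarrow> 'a rule set" where
  "rules_2b P q = {mk_rule (hd r2) (Bq q r2 \<union> Neg ` (Hq q r3 \<union> Hq q r') \<union> lnn ` (Bq q r3 \<union> Bq q r'))
      | r2 r3 r'. r2 \<in> R2 P q \<and> r3 \<in> R3 P q \<and> r' \<in> R1 P q \<union> R4 P q}"

definition rules_3b :: "'a rule set \<Rightarrow> 'a \<Rightarrow> 'a rule set" where
  "rules_3b P q = {mk_rule (hd r2) (Bq q r2 \<union> Neg ` Hq q r3 \<union> lnn ` (Bq q r3 \<union> {Pos h}) \<union> D)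
      | r2 r3 h D. r2 \<in> R2 P q \<and> r3 \<in> R3 P q \<and> h \<in> hd r2 \<and> D \<in> Dq q ((R0 P q \<union> R2 P q) - {r2})}"

definition rules_4 :: "'a rule set \<Rightarrow> 'a \<Rightarrow> 'a rule set" where
  "rules_4 P q = {mk_rule (Hq q r') (Bq q r' \<union> D)
      | r' D. r' \<in> R1 P q \<union> R4 P q \<and> D \<in> Dq q (R3 P q \<union> R4 P q) \<and> D \<inter> lnot ` Bq q r' = {}}"

definition rules_5 :: "'a rule set \<Rightarrow> 'a \<Rightarrow> 'a rule set" where
  "rules_5 P q = {mk_rule (Hq q r') (Bq q r' \<union> Neg ` (hd r \<union> Hq q r3) \<union> lnn ` (Bq q r \<union> Bq q r3) \<union> D)
      | r' r3 r D. r' \<in> R1 P q \<union> R4 P q \<and> r3 \<in> R3 P q \<and> r \<in> R0 P q \<union> R2 P q \<and> D \<in> Dq q (R4 P q)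
                   \<and> D \<inter> lnot ` Bq q r' = {}}"

definition rules_6 :: "'a rule set \<Rightarrow> 'a \<Rightarrow> 'a rule set" where
  "rules_6 P q = {mk_rule (Hq q r') (Bq q r' \<union> Neg ` Hq q r3 \<union> lnn ` (Bq q r3 \<union> {Pos h}) \<union> D)
      | r' r3 h D. r' \<in> R1 P q \<union> R4 P q \<and> r3 \<in> R3 P q \<and> h \<in> Hq q r'
                   \<and> D \<in> Dq q ((R1 P q \<union> R4 P q) - {r'})}"

definition rules_7 :: "'a rule set \<Rightarrow> 'a \<Rightarrow> 'a rule set" where
  "rules_7 P q = {mk_rule (hd r0 \<union> Hq q r3) (Bq q r0 \<union> Bq q r3 \<union> Neg ` Hq q r3' \<union> lnn ` (Bq q r3' \<union> {Pos h}) \<union> D)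
      | r0 r3 r3' D h. r0 \<in> R0 P q \<and> r3 \<in> R3 P q \<and> r3' \<in> R3 P q \<and> r3 \<noteq> r3'
                       \<and> D \<in> Dq q ((R0 P q \<union> R2 P q) - {r0}) \<and> h \<in> hd r0}"

definition fSP_pre :: "'a rule set \<Rightarrow> 'a \<Rightarrow> 'a rule set" where
  "fSP_pre P q = R_free P q \<union> rules_1a P q \<union> rules_2a P q \<union> rules_3a P q \<union> rules_1b P q
     \<union> rules_2b P q \<union> rules_3b P q \<union> rules_4 P q \<union> rules_5 P q \<union> rules_6 P q \<union> rules_7 P q"

lemmas rules_defs = rules_1a_def rules_2a_def rules_3a_def rules_1b_def rules_2b_def rules_3b_def
  rules_4_def rules_5_def rules_6_def rules_7_def

lemma fSP_eq: "fSP P q = NF (fSP_pre P q)"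
  unfolding fSP_def fSP_pre_def rules_defs R_defs Let_def by (rule refl)

lemma fSP_pre_free: "r \<in> R_free P q \<Longrightarrow> r \<in> fSP_pre P q"
  unfolding fSP_pre_def by blast

lemma fSP_pre_1a:
  "r0 \<in> R0 P q \<Longrightarrow> r4 \<in> R4 P q \<Longrightarrow>
    mk_rule (hd r0 \<union> Hq q r4) (Bq q r0 \<union> body r4) \<in> fSP_pre P q"
  unfolding fSP_pre_def rules_1a_def by blast

lemma fSP_pre_2a:
  "r0 \<in> R0 P q \<Longrightarrow> r3 \<in> R3 P q \<Longrightarrow> r' \<in> R1 P q \<union> R4 P q \<Longrightarrow>
    mk_rule (hd r0 \<union> Hq q r3) (Bq q r0 \<union> Bq q r3 \<union> Neg ` Hq q r' \<union> lnn ` Bq q r') \<in> fSP_pre P q"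
  unfolding fSP_pre_def rules_2a_def by blast

lemma fSP_pre_3a:
  "r0 \<in> R0 P q \<Longrightarrow> r3 \<in> R3 P q \<Longrightarrow> h \<in> hd r0 \<Longrightarrow> D \<in> Dq q ((R0 P q \<union> R2 P q) - {r0}) \<Longrightarrow>
    mk_rule (hd r0) (Bq q r0 \<union> {NegNeg h} \<union> D \<union> Bq q r3 \<union> Neg ` Hq q r3) \<in> fSP_pre P q"
  unfolding fSP_pre_def rules_3a_def by blast

lemma fSP_pre_1b:
  "r2 \<in> R2 P q \<Longrightarrow> r4 \<in> R4 P q \<Longrightarrow>
    mk_rule (hd r2) (Bq q r2 \<union> Neg ` Hq q r4 \<union> lnn ` body r4) \<in> fSP_pre P q"
  unfolding fSP_pre_def rules_1b_def by blast

lemma fSP_pre_3b: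
  "r2 \<in> R2 P q \<Longrightarrow> r3 \<in> R3 P q \<Longrightarrow> h \<in> hd r2 \<Longrightarrow> D \<in> Dq q ((R0 P q \<union> R2 P q) - {r2}) \<Longrightarrow>
    mk_rule (hd r2) (Bq q r2 \<union> Neg ` Hq q r3 \<union> lnn ` (Bq q r3 \<union> {Pos h}) \<union> D) \<in> fSP_pre P q"
  unfolding fSP_pre_def rules_3b_def by blast

lemma fSP_pre_4:
  "r' \<in> R1 P q \<union> R4 P q \<Longrightarrow> D \<in> Dq q (R3 P q \<union> R4 P q) \<Longrightarrow> D \<inter> lnot ` Bq q r' = {} \<Longrightarrow>
    mk_rule (Hq q r') (Bq q r' \<union> D) \<in> fSP_pre P q"
  unfolding fSP_pre_def rules_4_def by blast

lemma fSP_pre_6: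
  "r' \<in> R1 P q \<union> R4 P q \<Longrightarrow> r3 \<in> R3 P q \<Longrightarrow> h \<in> Hq q r' \<Longrightarrow>
    D \<in> Dq q ((R1 P q \<union> R4 P q) - {r'}) \<Longrightarrow>
    mk_rule (Hq q r') (Bq q r' \<union> Neg ` Hq q r3 \<union> lnn ` (Bq q r3 \<union> {Pos h}) \<union> D) \<in> fSP_pre P q"
  unfolding fSP_pre_def rules_6_def by blast

lemma fSP_pre_7:
  "r0 \<in> R0 P q \<Longrightarrow> r3 \<in> R3 P q \<Longrightarrow> r3' \<in> R3 P q \<Longrightarrow> r3 \<noteq> r3' \<Longrightarrow>
    D \<in> Dq q ((R0 P q \<union> R2 P q) - {r0}) \<Longrightarrow> h \<in> hd r0 \<Longrightarrow>
    mk_rule (hd r0 \<union> Hq q r3) (Bq q r0 \<union> Bq q r3 \<union> Neg ` Hq q r3' \<union> lnn ` (Bq q r3' \<union> {Pos h}) \<union> D)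
      \<in> fSP_pre P q"
  unfolding fSP_pre_def rules_7_def by blast

lemma q_notin_atoms_mk_rule:
  "q \<notin> atoms_rule (mk_rule H L) \<longleftrightarrow> q \<notin> H \<and> (\<forall>l\<in>L. lit_atom l \<noteq> q)"
proof -
  have "lit_atom l = q \<longleftrightarrow> l \<in> {Pos q, Neg q, NegNeg q}" for l
    by (cases l) auto
  then show ?thesis
    unfolding atoms_rule_def mk_rule_def by auto
qed

lemma q_notin_atoms_fSP_pre: "\<forall>\<rho>\<in>fSP_pre P q. q \<notin> atoms_rule \<rho>"
  unfolding fSP_pre_def rules_defs
  by (intro ballI, elim UnE CollectE exE conjE)
    (auto simp: q_notin_atoms_mk_rule body_R4 Hq_def dest: lit_atom_Bq lit_atom_Dq
      mem_R_freeD mem_R0D mem_R2D)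

lemma finite_rule_fSP_pre:
  assumes "finite P" and "\<forall>r\<in>P. finite_rule r"
  shows "\<forall>\<rho>\<in>fSP_pre P q. finite_rule \<rho>"
proof
  fix \<rho> assume "\<rho> \<in> fSP_pre P q"
  have fin_NF: "finite (hd r)" "finite (body r)" "finite (Bq q r)" "finite (Hq q r)"
    if "r \<in> NF P" for r
  proof -
    have "finite_rule r" using finite_rule_NF[OF assms(2) that] .
    then show "finite (hd r)" and "finite (body r)"
      by (simp_all add: finite_rule_def finite_body)
    then show "finite (Bq q r)" and "finite (Hq q r)"
      by (simp_all add: finite_subset[OF Bq_subset_body] finite_subset[OF Hq_subset_hd])
  qed
  from \<open>\<rho> \<in> fSP_pre P q\<close> show "finite_rule \<rho>"
    unfolding fSP_pre_def rules_defs R_defs Dq_def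
    by (elim UnE CollectE exE conjE)
      (simp_all add: fin_NF finite_NF[OF assms(1)] finite_rule_mk_rule finite_rule_NF[OF assms(2)])
qed

text \<open>Each rule of the families (3a), (3b), (6) and (7) has an atom \<open>h\<close> in its head and
  \<open>not not h\<close> in its body.\<close>
lemma rules_3a_ht_sat: "\<rho> \<in> rules_3a P q \<Longrightarrow> ht_sat Y Y \<rho>"
  unfolding rules_3a_def by (auto simp: ht_sat_mk_rule ball_Un)

lemma rules_3b_ht_sat: "\<rho> \<in> rules_3b P q \<Longrightarrow> ht_sat Y Y \<rho>"
  unfolding rules_3b_def by (auto simp: ht_sat_mk_rule ball_Un)

lemma rules_6_ht_sat: "\<rho> \<in> rules_6 P q \<Longrightarrow> ht_sat Y Y \<rho>"
  unfolding rules_6_def by (auto simp: ht_sat_mk_rule ball_Un)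

lemma rules_7_ht_sat: "\<rho> \<in> rules_7 P q \<Longrightarrow> ht_sat Y Y \<rho>"
  unfolding rules_7_def by (auto simp: ht_sat_mk_rule ball_Un)

locale forgetting =
  fixes P R :: "'a rule set" and q :: 'a and Y :: "'a set"
  assumes finite_P: "finite P" and finite_rules: "\<forall>r\<in>P. finite_rule r"
    and R_q_free: "\<forall>r\<in>R. q \<notin> atoms_rule r"
    and answer_set: "Y \<in> AS (P \<union> R)"
begin

lemma model: "\<forall>r\<in>P \<union> R. ht_sat Y Y r"
  using answer_set by (simp add: AS_iff)

lemma NF_model: "r \<in> NF P \<Longrightarrow> ht_sat Y Y r"
proof -
  have "\<forall>r\<in>P. ht_sat Y Y r"
    using model by simp
  then have "\<forall>r\<in>NF P. ht_sat Y Y r"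
    using ht_sat_NF_iff[OF order_refl finite_rules, of Y] by simp
  then show "r \<in> NF P \<Longrightarrow> ht_sat Y Y r" by simp
qed

lemma NF_minimal:
  assumes "X \<subset> Y" and "\<forall>r\<in>NF P. ht_sat X Y r" and "\<forall>r\<in>R. ht_sat X Y r"
  shows False
proof -
  have "\<forall>r\<in>P. ht_sat X Y r"
    using assms(1,2) ht_sat_NF_iff[OF _ finite_rules] by simp
  with assms(3) have "\<forall>r\<in>P \<union> R. ht_sat X Y r"
    by (simp add: ball_Un)
  with assms(1) answer_set show False
    unfolding AS_iff by blast
qed

lemma residue_sat_R14:
  assumes "q \<notin> Y" and "r \<in> R1 P q \<union> R4 P q"
  shows "residue_sat Y q r"
proof -
  from assms(2) have "r \<in> NF P" and "q \<notin> bp r" and "q \<notin> bmm r"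
    using mem_R1D[of r P q] mem_R4D[of r P q] by auto
  with assms(1) show ?thesis
    by (simp add: residue_sat_if_ht_sat NF_model)
qed

lemma residue_sat_R02:
  assumes "q \<in> Y" and "r \<in> R0 P q \<union> R2 P q"
  shows "residue_sat Y q r"
proof -
  from assms(2) have "r \<in> NF P" and "q \<notin> bm r" and "q \<notin> hd r"
    using mem_R0D[of r P q] mem_R2D[of r P q] by auto
  with assms(1) show ?thesis
    by (simp add: residue_sat_if_ht_sat NF_model)
qed

text \<open>If every rule able to derive \<open>q\<close> were satisfied without \<open>q\<close>, then \<open>Y - {q}\<close> would
  be a smaller model of the reduct.\<close>
lemma unsupported_R34:
  assumes "q \<in> Y"
  shows "\<exists>s\<in>R3 P q \<union> R4 P q. \<not> residue_sat Y q s"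
proof (rule ccontr)
  assume "\<not> (\<exists>s\<in>R3 P q \<union> R4 P q. \<not> residue_sat Y q s)"
  then have residue: "residue_sat Y q s" if "s \<in> R3 P q \<union> R4 P q" for s
    using that by auto
  have "ht_sat (Y - {q}) Y r" if "r \<in> NF P" for r
  proof (cases "q \<in> hd r")
    case True
    with that have "r \<in> R3 P q \<union> R4 P q"
      by (cases rule: NF_R_cases[where q = q])
        (auto dest: mem_R_freeD mem_R0D mem_R1D mem_R2D simp: atoms_rule_def)
    then show ?thesis
      by (intro ht_sat_Diff_if_residue_sat residue)
  next
    case False
    with that show ?thesis
      by (intro ht_sat_Diff_if_notin_hd NF_model)
  qed
  moreover have "ht_sat (Y - {q}) Y r" if "r \<in> R" for r
    using that model R_q_free by (simp add: ht_sat_Diff_if_notin_hd atoms_rule_def)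
  moreover have "Y - {q} \<subset> Y"
    using assms by auto
  ultimately show False
    using NF_minimal[of "Y - {q}"] by blast
qed

lemma Hq_meets_Y_R02:
  "q \<in> Y \<Longrightarrow> r \<in> R0 P q \<union> R2 P q \<Longrightarrow> \<forall>l\<in>Bq q r. lit_holds Y Y l \<Longrightarrow> Hq q r \<inter> Y \<noteq> {}"
  using residue_sat_R02 unfolding residue_sat_def by simp

lemma Hq_meets_Y_R14:
  "q \<notin> Y \<Longrightarrow> r \<in> R1 P q \<union> R4 P q \<Longrightarrow> \<forall>l\<in>Bq q r. lit_holds Y Y l \<Longrightarrow> Hq q r \<inter> Y \<noteq> {}"
  using residue_sat_R14 unfolding residue_sat_def by simp

lemma rules_1a_model: "\<rho> \<in> rules_1a P q \<Longrightarrow> ht_sat Y Y \<rho>"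
proof -
  assume "\<rho> \<in> rules_1a P q"
  then obtain r0 r4 where \<rho>: "\<rho> = mk_rule (hd r0 \<union> Hq q r4) (Bq q r0 \<union> body r4)"
    and r0: "r0 \<in> R0 P q" and r4: "r4 \<in> R4 P q"
    unfolding rules_1a_def by blast
  show ?thesis
    unfolding \<rho> ht_sat_mk_rule ball_Un
  proof (intro impI, elim conjE)
    assume B0: "\<forall>l\<in>Bq q r0. lit_holds Y Y l" and B4: "\<forall>l\<in>body r4. lit_holds Y Y l"
    show "(hd r0 \<union> Hq q r4) \<inter> Y \<noteq> {}"
    proof (cases "q \<in> Y")
      case True
      with r0 B0 have "Hq q r0 \<inter> Y \<noteq> {}"
        by (simp add: Hq_meets_Y_R02)
      then show ?thesis
        using Hq_subset_hd[of q r0] by auto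
    next
      case False
      with r4 B4 have "Hq q r4 \<inter> Y \<noteq> {}"
        by (simp add: Hq_meets_Y_R14 body_R4)
      then show ?thesis by auto
    qed
  qed
qed

lemma rules_2a_model: "\<rho> \<in> rules_2a P q \<Longrightarrow> ht_sat Y Y \<rho>"
proof -
  assume "\<rho> \<in> rules_2a P q"
  then obtain r0 r3 r' where
    \<rho>: "\<rho> = mk_rule (hd r0 \<union> Hq q r3) (Bq q r0 \<union> Bq q r3 \<union> Neg ` Hq q r' \<union> lnn ` Bq q r')"
    and r0: "r0 \<in> R0 P q" and r': "r' \<in> R1 P q \<union> R4 P q"
    unfolding rules_2a_def by blast
  show ?thesis
    unfolding \<rho> ht_sat_mk_rule ball_Un ball_Neg_holds_iff ball_lnn_holds_iff
  proof (intro impI, elim conjE)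
    assume B0: "\<forall>l\<in>Bq q r0. lit_holds Y Y l"
      and H': "Hq q r' \<inter> Y = {}" and B': "\<forall>l\<in>Bq q r'. lit_holds Y Y l"
    show "(hd r0 \<union> Hq q r3) \<inter> Y \<noteq> {}"
    proof (cases "q \<in> Y")
      case True
      with r0 B0 have "Hq q r0 \<inter> Y \<noteq> {}"
        by (simp add: Hq_meets_Y_R02)
      then show ?thesis
        using Hq_subset_hd[of q r0] by auto
    next
      case False
      with r' B' H' show ?thesis
        using Hq_meets_Y_R14 by simp
    qed
  qed
qed

lemma rules_1b_model: "\<rho> \<in> rules_1b P q \<Longrightarrow> ht_sat Y Y \<rho>"
proof -
  assume "\<rho> \<in> rules_1b P q"
  then obtain r2 r4 where \<rho>: "\<rho> = mk_rule (hd r2) (Bq q r2 \<union> Neg ` Hq q r4 \<union> lnn ` body r4)"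
    and r2: "r2 \<in> R2 P q" and r4: "r4 \<in> R4 P q"
    unfolding rules_1b_def by blast
  show ?thesis
    unfolding \<rho> ht_sat_mk_rule ball_Un ball_Neg_holds_iff ball_lnn_holds_iff
  proof (intro impI, elim conjE)
    assume B2: "\<forall>l\<in>Bq q r2. lit_holds Y Y l"
      and H4: "Hq q r4 \<inter> Y = {}" and B4: "\<forall>l\<in>body r4. lit_holds Y Y l"
    show "hd r2 \<inter> Y \<noteq> {}"
    proof (cases "q \<in> Y")
      case True
      with r2 B2 have "Hq q r2 \<inter> Y \<noteq> {}"
        by (simp add: Hq_meets_Y_R02)
      then show ?thesis
        using Hq_subset_hd[of q r2] by auto
    next
      case False
      with r4 B4 H4 show ?thesis
        using Hq_meets_Y_R14 by (simp add: body_R4)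
    qed
  qed
qed

lemma rules_2b_model: "\<rho> \<in> rules_2b P q \<Longrightarrow> ht_sat Y Y \<rho>"
proof -
  assume "\<rho> \<in> rules_2b P q"
  then obtain r2 r3 r' where
    \<rho>: "\<rho> = mk_rule (hd r2) (Bq q r2 \<union> Neg ` (Hq q r3 \<union> Hq q r') \<union> lnn ` (Bq q r3 \<union> Bq q r'))"
    and r2: "r2 \<in> R2 P q" and r': "r' \<in> R1 P q \<union> R4 P q"
    unfolding rules_2b_def by blast
  show ?thesis
    unfolding \<rho> ht_sat_mk_rule ball_Un ball_Neg_holds_iff ball_lnn_holds_iff
  proof (intro impI, elim conjE)
    assume B2: "\<forall>l\<in>Bq q r2. lit_holds Y Y l"
      and H': "(Hq q r3 \<union> Hq q r') \<inter> Y = {}" and B': "\<forall>l\<in>Bq q r'. lit_holds Y Y l"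
    show "hd r2 \<inter> Y \<noteq> {}"
    proof (cases "q \<in> Y")
      case True
      with r2 B2 have "Hq q r2 \<inter> Y \<noteq> {}"
        by (simp add: Hq_meets_Y_R02)
      then show ?thesis
        using Hq_subset_hd[of q r2] by auto
    next
      case False
      with r' B' have "Hq q r' \<inter> Y \<noteq> {}"
        by (simp add: Hq_meets_Y_R14)
      with H' show ?thesis by auto
    qed
  qed
qed

lemma rules_4_model: "\<rho> \<in> rules_4 P q \<Longrightarrow> ht_sat Y Y \<rho>"
proof -
  assume "\<rho> \<in> rules_4 P q"
  then obtain r' D where \<rho>: "\<rho> = mk_rule (Hq q r') (Bq q r' \<union> D)"
    and r': "r' \<in> R1 P q \<union> R4 P q" and D: "D \<in> Dq q (R3 P q \<union> R4 P q)"
    unfolding rules_4_def by blast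
  show ?thesis
    unfolding \<rho> ht_sat_mk_rule ball_Un
  proof (intro impI, elim conjE)
    assume B': "\<forall>l\<in>Bq q r'. lit_holds Y Y l" and "\<forall>d\<in>D. lit_holds Y Y d"
    then have "\<forall>s\<in>R3 P q \<union> R4 P q. residue_sat Y q s"
      using residue_sat_if_Dq_holds[OF D] by blast
    then have "q \<notin> Y"
      using unsupported_R34 by blast
    with r' B' show "Hq q r' \<inter> Y \<noteq> {}"
      by (simp add: Hq_meets_Y_R14)
  qed
qed

lemma rules_5_model: "\<rho> \<in> rules_5 P q \<Longrightarrow> ht_sat Y Y \<rho>"
proof -
  assume "\<rho> \<in> rules_5 P q"
  then obtain r' r3 r D where \<rho>: "\<rho> = mk_rule (Hq q r')
      (Bq q r' \<union> Neg ` (hd r \<union> Hq q r3) \<union> lnn ` (Bq q r \<union> Bq q r3) \<union> D)"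
    and r': "r' \<in> R1 P q \<union> R4 P q" and r: "r \<in> R0 P q \<union> R2 P q"
    unfolding rules_5_def by blast
  show ?thesis
    unfolding \<rho> ht_sat_mk_rule ball_Un ball_Neg_holds_iff ball_lnn_holds_iff
  proof (intro impI, elim conjE)
    assume B': "\<forall>l\<in>Bq q r'. lit_holds Y Y l"
      and H: "(hd r \<union> Hq q r3) \<inter> Y = {}" and B: "\<forall>l\<in>Bq q r. lit_holds Y Y l"
    show "Hq q r' \<inter> Y \<noteq> {}"
    proof (cases "q \<in> Y")
      case True
      with r B have "Hq q r \<inter> Y \<noteq> {}"
        by (simp add: Hq_meets_Y_R02)
      with H show ?thesis
        using Hq_subset_hd[of q r] by auto
    next
      case False
      with r' B' show ?thesis
        by (simp add: Hq_meets_Y_R14)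
    qed
  qed
qed

lemma fSP_pre_model: "\<rho> \<in> fSP_pre P q \<Longrightarrow> ht_sat Y Y \<rho>"
  unfolding fSP_pre_def
  by (elim UnE)
    (simp_all add: NF_model[OF conjunct1[OF mem_R_freeD]] rules_1a_model rules_2a_model
      rules_1b_model rules_2b_model rules_4_model rules_5_model rules_3a_ht_sat rules_3b_ht_sat
      rules_6_ht_sat rules_7_ht_sat)

end

locale forgetting_smaller_model = forgetting +
  fixes X :: "'a set"
  assumes X_subset: "X \<subseteq> Y" and q_notin_X: "q \<notin> X"
    and X_fSP_pre: "\<forall>\<rho>\<in>fSP_pre P q. ht_sat X Y \<rho>" and X_R: "\<forall>r\<in>R. ht_sat X Y r"
begin

lemma fSP_pre_head_meets_X:
  assumes "mk_rule H L \<in> fSP_pre P q" and "\<forall>l\<in>L. lit_holds X Y l"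
  shows "H \<inter> X \<noteq> {}"
  using bspec[OF X_fSP_pre assms(1)] assms(2) by (simp add: ht_sat_mk_rule)

lemma ball_lit_holds_there: "\<forall>l\<in>A. lit_holds X Y l \<Longrightarrow> \<forall>l\<in>A. lit_holds Y Y l"
  by (auto intro: lit_holds_there[OF X_subset])

lemma R_free_ht_sat: "r \<in> R_free P q \<Longrightarrow> ht_sat X Y r"
  by (rule bspec[OF X_fSP_pre fSP_pre_free])

lemma R14_ht_sat_if_q_notin:
  assumes "q \<notin> Y" and r: "r \<in> R1 P q \<union> R4 P q"
  shows "ht_sat X Y r"
  unfolding ht_sat_def
proof
  assume "\<forall>l\<in>body r. lit_holds X Y l"
  then have BX: "\<forall>l\<in>Bq q r. lit_holds X Y l"
    by (rule Bq_holds_of_body)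
  then have BY: "\<forall>l\<in>Bq q r. lit_holds Y Y l"
    by (rule ball_lit_holds_there)
  obtain h where h: "h \<in> Hq q r" "h \<in> Y"
    using Hq_meets_Y_R14[OF assms BY] by auto
  have "Hq q r \<inter> X \<noteq> {}"
  proof (cases "\<exists>r3\<in>R3 P q. \<not> residue_sat Y q r3")
    case True
    then obtain r3 where r3: "r3 \<in> R3 P q" and "\<not> residue_sat Y q r3" by blast
    then have B3: "\<forall>l\<in>Bq q r3. lit_holds Y Y l" and H3: "Hq q r3 \<inter> Y = {}"
      unfolding residue_sat_def by auto
    obtain D where D: "D \<in> Dq q ((R1 P q \<union> R4 P q) - {r})" and DX: "\<forall>d\<in>D. lit_holds X Y d"
      using Dq_holds_if_residue_sat[of "(R1 P q \<union> R4 P q) - {r}" Y q X] residue_sat_R14[OF assms(1)]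
      by auto
    have "\<forall>l\<in>Bq q r \<union> Neg ` Hq q r3 \<union> lnn ` (Bq q r3 \<union> {Pos h}) \<union> D. lit_holds X Y l"
      using BX B3 H3 h(2) DX by (auto simp: ball_Un)
    then show ?thesis
      using fSP_pre_head_meets_X[OF fSP_pre_6[OF r r3 h(1) D]] by simp
  next
    case False
    have "residue_sat Y q s" if "s \<in> R3 P q \<union> R4 P q" for s
    proof (cases "s \<in> R3 P q")
      case True
      with False show ?thesis by blast
    next
      case False
      with that show ?thesis by (simp add: residue_sat_R14[OF assms(1)])
    qed
    then obtain D where D: "D \<in> Dq q (R3 P q \<union> R4 P q)" and DX: "\<forall>d\<in>D. lit_holds X Y d"
      using Dq_holds_if_residue_sat[of "R3 P q \<union> R4 P q" Y q X] by blast
    have "lnot l \<notin> D" if "l \<in> Bq q r" for l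
      using DX BY that by force
    then have "D \<inter> lnot ` Bq q r = {}"
      by blast
    moreover have "\<forall>l\<in>Bq q r \<union> D. lit_holds X Y l"
      using BX DX by (simp add: ball_Un)
    ultimately show ?thesis
      by (rule fSP_pre_head_meets_X[OF fSP_pre_4[OF r D]])
  qed
  then show "hd r \<inter> X \<noteq> {}"
    using Hq_subset_hd[of q r] by auto
qed

lemma NF_ht_sat_if_q_notin:
  assumes "q \<notin> Y" and "r \<in> NF P"
  shows "ht_sat X Y r"
  using assms(2)
proof (cases rule: NF_R_cases[where q = q])
  case 1
  then show ?thesis by (rule R_free_ht_sat)
next
  case 2
  then show ?thesis using mem_R0D[of r P q] q_notin_X by (auto simp: ht_sat_iff)
next
  case 3
  then show ?thesis using R14_ht_sat_if_q_notin[OF assms(1)] by simp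
next
  case 4
  then show ?thesis using mem_R2D[of r P q] assms(1) by (auto simp: ht_sat_iff)
next
  case 5
  then show ?thesis using mem_R3D[of r P q] assms(1) by (auto simp: ht_sat_iff)
next
  case 6
  then show ?thesis using R14_ht_sat_if_q_notin[OF assms(1)] by simp
qed

lemma R2_hd_meets_X:
  assumes "q \<in> Y" and r: "r \<in> R2 P q" and BX: "\<forall>l\<in>Bq q r. lit_holds X Y l"
  shows "hd r \<inter> X \<noteq> {}"
proof -
  have "Hq q r \<inter> Y \<noteq> {}"
    using Hq_meets_Y_R02[OF assms(1) _ ball_lit_holds_there[OF BX]] r by simp
  then obtain h where h: "h \<in> hd r" "h \<in> Y"
    using Hq_subset_hd[of q r] by auto
  obtain s where s: "s \<in> R3 P q \<union> R4 P q" and "\<not> residue_sat Y q s"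
    using unsupported_R34[OF assms(1)] by auto
  then have Bs: "\<forall>l\<in>Bq q s. lit_holds Y Y l" and Hs: "Hq q s \<inter> Y = {}"
    unfolding residue_sat_def by auto
  from s show ?thesis
  proof
    assume s3: "s \<in> R3 P q"
    obtain D where D: "D \<in> Dq q ((R0 P q \<union> R2 P q) - {r})" and DX: "\<forall>d\<in>D. lit_holds X Y d"
      using Dq_holds_if_residue_sat[of "(R0 P q \<union> R2 P q) - {r}" Y q X] residue_sat_R02[OF assms(1)]
      by auto
    have "\<forall>l\<in>Bq q r \<union> Neg ` Hq q s \<union> lnn ` (Bq q s \<union> {Pos h}) \<union> D. lit_holds X Y l"
      using BX Bs Hs h(2) DX by (auto simp: ball_Un)
    then show ?thesis
      using fSP_pre_head_meets_X[OF fSP_pre_3b[OF r s3 h(1) D]] by simp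
  next
    assume s4: "s \<in> R4 P q"
    have "\<forall>l\<in>Bq q r \<union> Neg ` Hq q s \<union> lnn ` body s. lit_holds X Y l"
      using BX Bs Hs by (auto simp: ball_Un body_R4[OF s4])
    then show ?thesis
      using fSP_pre_head_meets_X[OF fSP_pre_1b[OF r s4]] by simp
  qed
qed

lemma NF_ht_sat_insert_q:
  assumes "q \<in> Y" and R0_sat: "\<forall>r0\<in>R0 P q. (\<forall>l\<in>Bq q r0. lit_holds X Y l) \<longrightarrow> hd r0 \<inter> X \<noteq> {}"
    and "r \<in> NF P"
  shows "ht_sat (insert q X) Y r"
proof (cases "q \<in> hd r")
  case True
  then show ?thesis by (auto simp: ht_sat_def)
next
  case False
  from assms(3) show ?thesis
  proof (cases rule: NF_R_cases[where q = q])
    case 1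
    then show ?thesis
      using R_free_ht_sat ht_sat_q_free_cong[of q r X "insert q X" Y Y] mem_R_freeD[of r P q] by auto
  next
    case 2
    with R0_sat show ?thesis
      unfolding ht_sat_def by (auto dest: Bq_holds_of_insert)
  next
    case 3
    then show ?thesis using mem_R1D[of r P q] assms(1) by (auto simp: ht_sat_iff)
  next
    case 4
    then show ?thesis
      unfolding ht_sat_def using R2_hd_meets_X[OF assms(1)] by (auto dest: Bq_holds_of_insert)
  next
    case 5
    with False show ?thesis using mem_R3D[of r P q] by simp
  next
    case 6
    with False show ?thesis using mem_R4D[of r P q] by simp
  qed
qed

lemma R34_ht_sat_if_R0_violated:
  assumes "q \<in> Y" and r0: "r0 \<in> R0 P q" and B0: "\<forall>l\<in>Bq q r0. lit_holds X Y l"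
    and H0: "hd r0 \<inter> X = {}" and r: "r \<in> R3 P q \<union> R4 P q"
  shows "ht_sat X Y r"
  unfolding ht_sat_def
proof (rule impI, rule ccontr)
  assume B: "\<forall>l\<in>body r. lit_holds X Y l" and "\<not> hd r \<inter> X \<noteq> {}"
  then have HX: "Hq q r \<inter> X = {}"
    using Hq_subset_hd[of q r] by auto
  have BX: "\<forall>l\<in>Bq q r. lit_holds X Y l"
    using B by (rule Bq_holds_of_body)
  have "Hq q r0 \<inter> Y \<noteq> {}"
    using Hq_meets_Y_R02[OF assms(1) _ ball_lit_holds_there[OF B0]] r0 by simp
  then obtain h0 where h0: "h0 \<in> hd r0" "h0 \<in> Y"
    using Hq_subset_hd[of q r0] by auto
  obtain D0 where D0: "D0 \<in> Dq q ((R0 P q \<union> R2 P q) - {r0})" and D0X: "\<forall>d\<in>D0. lit_holds X Y d"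
    using Dq_holds_if_residue_sat[of "(R0 P q \<union> R2 P q) - {r0}" Y q X] residue_sat_R02[OF assms(1)]
    by auto
  from r show False
  proof
    assume r4: "r \<in> R4 P q"
    have "\<forall>l\<in>Bq q r0 \<union> body r. lit_holds X Y l"
      using B0 B by (simp add: ball_Un)
    from fSP_pre_head_meets_X[OF fSP_pre_1a[OF r0 r4] this] H0 HX show False
      by auto
  next
    assume r3: "r \<in> R3 P q"
    show False
    proof (cases "Hq q r \<inter> Y = {}")
      case True
      have "\<forall>l\<in>Bq q r0 \<union> {NegNeg h0} \<union> D0 \<union> Bq q r \<union> Neg ` Hq q r. lit_holds X Y l"
        using B0 h0(2) D0X BX True by (auto simp: ball_Un)
      from fSP_pre_head_meets_X[OF fSP_pre_3a[OF r0 r3 h0(1) D0] this] H0 show False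
        by auto
    next
      case False
      obtain s where s: "s \<in> R3 P q \<union> R4 P q" and "\<not> residue_sat Y q s"
        using unsupported_R34[OF assms(1)] by auto
      then have Bs: "\<forall>l\<in>Bq q s. lit_holds Y Y l" and Hs: "Hq q s \<inter> Y = {}"
        unfolding residue_sat_def by auto
      from s show False
      proof
        assume s3: "s \<in> R3 P q"
        from False Hs have "r \<noteq> s" by auto
        have "\<forall>l\<in>Bq q r0 \<union> Bq q r \<union> Neg ` Hq q s \<union> lnn ` (Bq q s \<union> {Pos h0}) \<union> D0.
            lit_holds X Y l"
          using B0 BX Bs Hs h0(2) D0X by (auto simp: ball_Un)
        from fSP_pre_head_meets_X[OF fSP_pre_7[OF r0 r3 s3 \<open>r \<noteq> s\<close> D0 h0(1)] this] H0 HX show False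
          by auto
      next
        assume s4: "s \<in> R4 P q"
        have "\<forall>l\<in>Bq q r0 \<union> Bq q r \<union> Neg ` Hq q s \<union> lnn ` Bq q s. lit_holds X Y l"
          using B0 BX Bs Hs by (auto simp: ball_Un)
        from fSP_pre_head_meets_X[OF fSP_pre_2a[OF r0 r3] this] s4 H0 HX show False
          by auto
      qed
    qed
  qed
qed

lemma NF_ht_sat_if_R0_violated:
  assumes "q \<in> Y" and "r0 \<in> R0 P q" and "\<forall>l\<in>Bq q r0. lit_holds X Y l"
    and "hd r0 \<inter> X = {}" and "r \<in> NF P"
  shows "ht_sat X Y r"
  using assms(5)
proof (cases rule: NF_R_cases[where q = q])
  case 1
  then show ?thesis by (rule R_free_ht_sat)
next
  case 2
  then show ?thesis using mem_R0D[of r P q] q_notin_X by (auto simp: ht_sat_iff)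
next
  case 3
  then show ?thesis using mem_R1D[of r P q] assms(1) by (auto simp: ht_sat_iff)
next
  case 4
  then show ?thesis
    unfolding ht_sat_def using R2_hd_meets_X[OF assms(1)] Bq_holds_of_body[of r X Y q] by blast
next
  case 5
  then show ?thesis using R34_ht_sat_if_R0_violated[OF assms(1-4)] by simp
next
  case 6
  then show ?thesis using R34_ht_sat_if_R0_violated[OF assms(1-4)] by simp
qed

text \<open>The heart of the proof: a model \<open>X\<close> of the reducts of \<open>fSP_pre P q\<close> and \<open>R\<close> below \<open>Y - {q}\<close>
  yields a model of \<open>(NF P \<union> R)\<^sup>Y\<close> strictly below \<open>Y\<close>, namely \<open>X\<close> or \<open>insert q X\<close>.\<close>
lemma X_eq_Y_Diff_q: "X = Y - {q}"
proof (rule ccontr)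
  assume "X \<noteq> Y - {q}"
  with X_subset q_notin_X have "X \<subset> Y - {q}" by auto
  show False
  proof (cases "q \<in> Y")
    case False
    with \<open>X \<subset> Y - {q}\<close> have "X \<subset> Y" by auto
    with X_R show False
      using NF_minimal NF_ht_sat_if_q_notin[OF False] by blast
  next
    case True
    show False
    proof (cases "\<forall>r0\<in>R0 P q. (\<forall>l\<in>Bq q r0. lit_holds X Y l) \<longrightarrow> hd r0 \<inter> X \<noteq> {}")
      case R0_sat: True
      from \<open>X \<subset> Y - {q}\<close> True have "insert q X \<subset> Y" by auto
      moreover have "\<forall>r\<in>R. ht_sat (insert q X) Y r"
        using X_R ball_ht_sat_q_free_cong[OF R_q_free, of X "insert q X" Y Y] by simp
      ultimately show False
        using NF_minimal NF_ht_sat_insert_q[OF True R0_sat] by blast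
    next
      case False
      then obtain r0 where "r0 \<in> R0 P q" "\<forall>l\<in>Bq q r0. lit_holds X Y l" "hd r0 \<inter> X = {}"
        by blast
      moreover from \<open>X \<subset> Y - {q}\<close> have "X \<subset> Y" by auto
      ultimately show False
        using NF_minimal X_R NF_ht_sat_if_R0_violated[OF True] by blast
    qed
  qed
qed

end

context forgetting
begin

lemma forgotten_model: "\<forall>r\<in>fSP P q \<union> R. ht_sat (Y - {q}) (Y - {q}) r"
proof -
  have "\<forall>\<rho>\<in>fSP_pre P q. ht_sat Y Y \<rho>"
    using fSP_pre_model by blast
  then have "\<forall>\<rho>\<in>fSP_pre P q. ht_sat (Y - {q}) (Y - {q}) \<rho>"
    using ball_ht_sat_q_free_cong[OF q_notin_atoms_fSP_pre[of P q], of Y "Y - {q}" Y "Y - {q}"] by simp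
  then have "\<forall>r\<in>fSP P q. ht_sat (Y - {q}) (Y - {q}) r"
    unfolding fSP_eq
    using ht_sat_NF_iff[OF order_refl finite_rule_fSP_pre[OF finite_P finite_rules]] by simp
  moreover have "\<forall>r\<in>R. ht_sat (Y - {q}) (Y - {q}) r"
    using model ball_ht_sat_q_free_cong[OF R_q_free, of Y "Y - {q}" Y "Y - {q}"] by simp
  ultimately show ?thesis by (simp add: ball_Un)
qed

lemma forgotten_minimal:
  assumes "X \<subset> Y - {q}"
  shows "\<exists>r\<in>fSP P q \<union> R. \<not> ht_sat X (Y - {q}) r"
proof (rule ccontr)
  assume "\<not> ?thesis"
  then have fSP_sat: "\<forall>r\<in>fSP P q. ht_sat X (Y - {q}) r" and R_sat: "\<forall>r\<in>R. ht_sat X (Y - {q}) r"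
    by auto
  have "\<forall>\<rho>\<in>fSP_pre P q. ht_sat X (Y - {q}) \<rho>"
    using fSP_sat assms ht_sat_NF_iff[OF _ finite_rule_fSP_pre[OF finite_P finite_rules]]
    unfolding fSP_eq by auto
  then have "\<forall>\<rho>\<in>fSP_pre P q. ht_sat X Y \<rho>"
    using ball_ht_sat_q_free_cong[OF q_notin_atoms_fSP_pre[of P q], of X X "Y - {q}" Y] by simp
  moreover have "\<forall>r\<in>R. ht_sat X Y r"
    using R_sat ball_ht_sat_q_free_cong[OF R_q_free, of X X "Y - {q}" Y] by simp
  ultimately interpret forgetting_smaller_model P R q Y X
    using assms by unfold_locales auto
  from X_eq_Y_Diff_q assms show False by simp
qed

lemma forgotten_answer_set: "Y - {q} \<in> AS (fSP P q \<union> R)"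
  unfolding AS_iff using forgotten_model forgotten_minimal by blast

end

theorem theorem3:
  fixes P R :: "'a rule set" and \<Sigma> :: "'a set" and q :: 'a
  assumes "finite P" and "\<forall>r\<in>P. finite_rule r" and "atoms P \<subseteq> \<Sigma>"
      and "q \<in> \<Sigma>"
      and "finite R" and "\<forall>r\<in>R. finite_rule r" and "atoms R \<subseteq> \<Sigma> - {q}"
  shows "(\<lambda>Y. Y - {q}) ` AS (P \<union> R) \<subseteq> AS (fSP P q \<union> R)"
proof
  fix Y' assume "Y' \<in> (\<lambda>Y. Y - {q}) ` AS (P \<union> R)"
  then obtain Y where "Y \<in> AS (P \<union> R)" and Y': "Y' = Y - {q}"
    by blast
  moreover have "\<forall>r\<in>R. q \<notin> atoms_rule r"
    using assms(7) unfolding atoms_def by blast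
  ultimately interpret forgetting P R q Y
    using assms(1,2) by unfold_locales
  show "Y' \<in> AS (fSP P q \<union> R)"
    unfolding Y' by (rule forgotten_answer_set)
qed

end
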